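(* Let $n\ge1$ be an integer, $p\in(0,1)$, with all notation as in the context. Then for all real $x$, $$Q_n^{\mathrm{Lin,LC}}\Big(x+\frac12\Big)=Q(x):=\begin{cases}Q_n^{\mathrm{Interp}}(x;j)&\text{if } x\in\delta_j \text{ for some } j\in\mathbb{Z}\cap[j_*,n],\\ Q_n^{\mathrm{Lin}}\big(x+\frac12\big)&\text{otherwise.}\end{cases}$$
   Context: $q:=1-p$; $B_n$ is binomial with parameters $n,p$; $Q_n(x):=\mathbf{P}(B_n\ge x)$; $q_j:=Q_n(j)$, $p_j:=q_j-q_{j+1}=\binom nj p^jq^{n-j}$ for $j\in\mathbb{Z}$; $j_*:=\lfloor(n+1)p\rfloor+1$. $Q_n^{\mathrm{Lin}}$ is the linear interpolation of $Q_n$ over $\mathbb{Z}$, i.e. $Q_n^{\mathrm{Lin}}(x)=(1-(x-j))q_j+(x-j)q_{j+1}$ for $j\le x\le j+1$, $j\in\mathbb{Z}$; $Q_n^{\mathrm{Lin,LC}}$ is the least log-concave majorant of $Q_n^{\mathrm{Lin}}$ on $\mathbb{R}$ (smallest $g\ge Q_n^{\mathrm{Lin}}$ with $g\ge0$ and $\ln g$ concave, values $-\infty$ allowed). For integers $j_*\le j\le n$, $x_j:=j-\frac12+\frac{q_j}{p_j}+\big(\frac{q_j}{p_{j-1}}-\frac{q_j}{p_j}\big)/\ln\frac{p_{j-1}}{p_j}$ and $y_j:=j-\frac12+\frac{q_j}{p_{j-1}}+\big(\frac{q_j}{p_{j-1}}-\frac{q_j}{p_j}\big)/\ln\frac{p_{j-1}}{p_j}$;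 for integers $j\ge n+1$, $x_j:=j+\frac12$, $y_j:=j-\frac12$. For integers $j\ge j_*$, $\delta_j:=(y_j,x_j)$ (a nonempty open interval), and for $x\in\delta_j$, $$Q_n^{\mathrm{Interp}}(x;j):=Q_n^{\mathrm{Lin}}\big(y_j+\tfrac12\big)^{1-\delta}\,Q_n^{\mathrm{Lin}}\big(x_j+\tfrac12\big)^{\delta},\qquad\delta:=\frac{x-y_j}{x_j-y_j}.$$ *)

theory Defs
  imports "HOL-Probability.Probability"
begin

definition Qn :: "nat \<Rightarrow> real \<Rightarrow> real \<Rightarrow> real" where
  "Qn n p x = measure_pmf.prob (binomial_pmf n p) {k. x \<le> real k}"

definition qj :: "nat \<Rightarrow> real \<Rightarrow> int \<Rightarrow> real" where
  "qj n p j = Qn n p (real_of_int j)"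

definition pj :: "nat \<Rightarrow> real \<Rightarrow> int \<Rightarrow> real" where
  "pj n p j = qj n p j - qj n p (j + 1)"

definition jstar :: "nat \<Rightarrow> real \<Rightarrow> int" where
  "jstar n p = \<lfloor>(real n + 1) * p\<rfloor> + 1"

definition Qlin :: "nat \<Rightarrow> real \<Rightarrow> real \<Rightarrow> real" where
  "Qlin n p x = (let j = \<lfloor>x\<rfloor> in
      (1 - (x - real_of_int j)) * qj n p j + (x - real_of_int j) * qj n p (j + 1))"

text \<open>Log-concavity of a nonnegative function (ln g concave, value -infinity allowed).\<close>
definition log_concave_fun :: "(real \<Rightarrow> real) \<Rightarrow> bool" where
  "log_concave_fun g \<longleftrightarrow> (\<forall>x. 0 \<le> g x) \<and>
     (\<forall>x y t. 0 < t \<and> t < 1 \<longrightarrow> g x powr (1 - t) * g y powr t \<le> g ((1 - t) * x + t * y))"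

definition QlinLC :: "nat \<Rightarrow> real \<Rightarrow> real \<Rightarrow> real" where
  "QlinLC n p x = Inf {g x | g. log_concave_fun g \<and> (\<forall>y. Qlin n p y \<le> g y)}"

definition xj :: "nat \<Rightarrow> real \<Rightarrow> int \<Rightarrow> real" where
  "xj n p j = (if j \<le> int n then
      real_of_int j - 1/2 + qj n p j / pj n p j
        + (qj n p j / pj n p (j - 1) - qj n p j / pj n p j) / ln (pj n p (j - 1) / pj n p j)
    else real_of_int j + 1/2)"

definition yj :: "nat \<Rightarrow> real \<Rightarrow> int \<Rightarrow> real" where
  "yj n p j = (if j \<le> int n then
      real_of_int j - 1/2 + qj n p j / pj n p (j - 1)
        + (qj n p j / pj n p (j - 1) - qj n p j / pj n p j) / ln (pj n p (j - 1) / pj n p j)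
    else real_of_int j - 1/2)"

definition deltaj :: "nat \<Rightarrow> real \<Rightarrow> int \<Rightarrow> real set" where
  "deltaj n p j = {yj n p j <..< xj n p j}"

definition QInterp :: "nat \<Rightarrow> real \<Rightarrow> real \<Rightarrow> int \<Rightarrow> real" where
  "QInterp n p x j = (let d = (x - yj n p j) / (xj n p j - yj n p j) in
      Qlin n p (yj n p j + 1/2) powr (1 - d) * Qlin n p (xj n p j + 1/2) powr d)"

end

theory Submission
  imports Defs
begin

(* The least log-concave majorant of a nonnegative f equals f at every t where some exponential
   s -> exp (c - sigma s) lies above f and touches it at t, and between two points touched by the
   same exponential it is the geometric interpolation of the values of f there. For f = Q_n^Lin,
   ln f is concave on each [k, k + 1] with slope -p_k / f, so touching can be checked piece by
   piece. Below j_* the p_k increase, hence so do the hazard rates p_k / q_k, and every point is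
   touched. From j_* on, r_j = p_(j-1) / p_j > 1 increases in j (log-concavity of the binomial),
   and delta_j + 1/2 is the gap between the two points at which one exponential touches f on the
   pieces left and right of j. With the logarithmic mean L(r) = (r - 1) / ln r and
   v_j = q_j / p_(j-1), the ends of that gap are j - v_j (L(r_j) - 1) and j + v_j (r_j - L(r_j));
   1 <= L(r) <= r, the monotonicity of L(r) / r and the inequality v_j (r_j - 1) <= 1 keep
   consecutive gaps ordered and disjoint, so the touching exponentials propagate from bridge to
   bridge by induction on j. *)

section \<open>The logarithmic mean\<close>

definition logmean :: "real \<Rightarrow> real" where
  "logmean r = (r - 1) / ln r"

lemma one_le_logmean:
  assumes "1 < r"
  shows "1 \<le> logmean r"
  using ln_le_minus_one[of r] assms by (simp add: logmean_def)

lemma logmean_le: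
  assumes "1 < r"
  shows "logmean r \<le> r"
proof -
  have "ln (1 / r) \<le> 1 / r - 1"
    using assms by (intro ln_le_minus_one) simp
  then have "r - 1 \<le> r * ln r"
    using assms by (simp add: ln_div field_simps)
  then show ?thesis
    using assms by (simp add: logmean_def pos_divide_le_eq mult.commute)
qed

lemma one_minus_exp_neg_div_antimono:
  fixes a b :: real
  assumes "0 < a" "a \<le> b"
  shows "(1 - exp (- b)) / b \<le> (1 - exp (- a)) / a"
proof -
  have "\<exists>y. ((\<lambda>L. (1 - exp (- L)) / L) has_real_derivative y) (at x) \<and> y \<le> 0"
    if "a \<le> x" for x
  proof -
    have x: "0 < x" using that assms by simp
    have "exp (- x) * (1 + x) \<le> exp (- x) * exp x"
      by (intro mult_left_mono) auto
    then have "(exp (- x) * x - (1 - exp (- x))) / (x * x) \<le> 0"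
      by (intro divide_nonpos_nonneg) (auto simp: exp_minus field_simps)
    moreover have "((\<lambda>L. (1 - exp (- L)) / L) has_real_derivative
        (exp (- x) * x - (1 - exp (- x))) / (x * x)) (at x)"
      using x by (auto intro!: derivative_eq_intros)
    ultimately show ?thesis by blast
  qed
  then show ?thesis
    using DERIV_nonpos_imp_nonincreasing[OF assms(2)] by blast
qed

lemma logmean_div_antimono:
  assumes "1 < r" "r \<le> r'"
  shows "logmean r' / r' \<le> logmean r / r"
proof -
  have "logmean s / s = (1 - exp (- ln s)) / ln s" if "1 < s" for s
    using that by (simp add: logmean_def exp_minus field_simps)
  moreover have "(1 - exp (- ln r')) / ln r' \<le> (1 - exp (- ln r)) / ln r"
    using assms by (intro one_minus_exp_neg_div_antimono) auto
  ultimately show ?thesis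
    using assms by simp
qed

section \<open>Least log-concave majorants\<close>

definition lc_majorant :: "(real \<Rightarrow> real) \<Rightarrow> real \<Rightarrow> real" where
  "lc_majorant f t = Inf {g t | g. log_concave_fun g \<and> (\<forall>y. f y \<le> g y)}"

lemma log_concave_fun_exp_affine: "log_concave_fun (\<lambda>s. exp (c - \<sigma> * s))"
  unfolding log_concave_fun_def
proof (intro conjI allI impI)
  fix x y t :: real
  have "exp (c - \<sigma> * x) powr (1 - t) * exp (c - \<sigma> * y) powr t
      = exp ((1 - t) * (c - \<sigma> * x) + t * (c - \<sigma> * y))"
    by (simp add: powr_def exp_add)
  also have "(1 - t) * (c - \<sigma> * x) + t * (c - \<sigma> * y) = c - \<sigma> * ((1 - t) * x + t * y)"
    by (simp add: algebra_simps)
  finally show "exp (c - \<sigma> * x) powr (1 - t) * exp (c - \<sigma> * y) powr t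
      \<le> exp (c - \<sigma> * ((1 - t) * x + t * y))"
    by simp
qed simp

lemma log_concave_fun_step:
  assumes "0 \<le> B"
  shows "log_concave_fun (\<lambda>s. if s < a then B else 0)"
  unfolding log_concave_fun_def
proof (intro conjI allI impI)
  fix x y t :: real
  assume t: "0 < t \<and> t < 1"
  show "(if x < a then B else 0) powr (1 - t) * (if y < a then B else 0) powr t
      \<le> (if (1 - t) * x + t * y < a then B else 0)"
  proof (cases "x < a \<and> y < a")
    case True
    have "(1 - t) * x + t * y < (1 - t) * a + t * a"
      using True t by (intro add_strict_mono mult_strict_left_mono) auto
    also have "\<dots> = a"
      by (simp add: algebra_simps)
    finally show ?thesis
      using True assms by (simp add: powr_add[symmetric])
  qed (use assms in auto)
qed (use assms in simp)

lemma lc_majorant_eqI: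
  assumes "log_concave_fun g\<^sub>0" "\<forall>y. f y \<le> g\<^sub>0 y"
    and "\<And>g. log_concave_fun g \<Longrightarrow> \<forall>y. f y \<le> g y \<Longrightarrow> g\<^sub>0 t \<le> g t"
  shows "lc_majorant f t = g\<^sub>0 t"
  unfolding lc_majorant_def using assms by (intro cInf_eq_minimum) auto

lemma lc_majorant_eq_self:
  assumes "log_concave_fun g\<^sub>0" "\<forall>y. f y \<le> g\<^sub>0 y" "g\<^sub>0 t = f t"
  shows "lc_majorant f t = f t"
  using lc_majorant_eqI[OF assms(1,2), of t] assms(3) by auto

lemma le_exp_affine_if_log_bounded:
  fixes f :: "real \<Rightarrow> real"
  assumes "0 \<le> f y" "\<forall>s. 0 < f s \<longrightarrow> ln (f s) + \<sigma> * s \<le> c"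
  shows "f y \<le> exp (c - \<sigma> * y)"
proof (cases "f y = 0")
  case False
  then have pos: "0 < f y"
    using assms(1) by linarith
  then have "ln (f y) \<le> c - \<sigma> * y"
    using assms(2) by force
  then show ?thesis
    using pos by (metis exp_le_cancel_iff exp_ln)
qed simp

lemma lc_majorant_eq_if_log_supported:
  fixes f :: "real \<Rightarrow> real"
  assumes "\<forall>y. 0 \<le> f y" "0 < f t"
    and "\<forall>s. 0 < f s \<longrightarrow> ln (f s) + \<sigma> * s \<le> ln (f t) + \<sigma> * t"
  shows "lc_majorant f t = f t"
proof (rule lc_majorant_eq_self)
  let ?c = "ln (f t) + \<sigma> * t"
  show "log_concave_fun (\<lambda>s. exp (?c - \<sigma> * s))"
    by (rule log_concave_fun_exp_affine)
  show "\<forall>y. f y \<le> exp (?c - \<sigma> * y)"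
    using assms le_exp_affine_if_log_bounded by blast
  show "exp (?c - \<sigma> * t) = f t"
    using assms(2) by simp
qed

lemma lc_majorant_eq_0:
  assumes "\<forall>y. f y \<le> B" "0 \<le> B" "\<forall>y\<ge>a. f y = 0" "a \<le> t"
  shows "lc_majorant f t = 0"
proof -
  have "lc_majorant f t = f t"
    using assms by (intro lc_majorant_eq_self[OF log_concave_fun_step[of B a]]) auto
  then show ?thesis
    using assms by simp
qed

lemma lc_majorant_eq_geometric_interpolation:
  fixes f :: "real \<Rightarrow> real"
  assumes "\<forall>y. 0 \<le> f y" "a < t" "t < b" "0 < f a" "0 < f b"
    and "\<forall>s. 0 < f s \<longrightarrow> ln (f s) + \<sigma> * s \<le> c"
    and "ln (f a) + \<sigma> * a = c" "ln (f b) + \<sigma> * b = c"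
  defines "d \<equiv> (t - a) / (b - a)"
  shows "lc_majorant f t = f a powr (1 - d) * f b powr d"
proof -
  have d: "0 < d" "d < 1"
    using assms(2,3) by (auto simp: d_def field_simps)
  have "d * (b - a) = t - a"
    using assms(2,3) by (simp add: d_def)
  then have t: "t = (1 - d) * a + d * b"
    by (simp add: algebra_simps)
  have ln_ab: "ln (f a) = c - \<sigma> * a" "ln (f b) = c - \<sigma> * b"
    using assms(7,8) by linarith+
  have "f a powr (1 - d) * f b powr d = exp ((1 - d) * ln (f a) + d * ln (f b))"
    using assms(4,5) by (simp add: powr_def exp_add)
  also have "(1 - d) * ln (f a) + d * ln (f b) = c - \<sigma> * t"
    unfolding ln_ab t by (simp add: algebra_simps)
  finally have interp: "f a powr (1 - d) * f b powr d = exp (c - \<sigma> * t)" .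
  show ?thesis
    unfolding interp
  proof (rule lc_majorant_eqI)
    show "log_concave_fun (\<lambda>s. exp (c - \<sigma> * s))"
      by (rule log_concave_fun_exp_affine)
    show "\<forall>y. f y \<le> exp (c - \<sigma> * y)"
      using assms le_exp_affine_if_log_bounded by blast
  next
    fix g
    assume g: "log_concave_fun g" "\<forall>y. f y \<le> g y"
    have "exp (c - \<sigma> * t) = f a powr (1 - d) * f b powr d"
      using interp ..
    also have "\<dots> \<le> g a powr (1 - d) * g b powr d"
      using g d assms(1) by (intro mult_mono powr_mono2) (auto simp: log_concave_fun_def)
    also have "\<dots> \<le> g t"
      using g(1) d unfolding t log_concave_fun_def by blast
    finally show "exp (c - \<sigma> * t) \<le> g t" .
  qed
qed

section \<open>Binomial tails and their linear interpolation\<close>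

lemma jstar_le_iff: "jstar n p \<le> k \<longleftrightarrow> (real n + 1) * p < real_of_int k"
  using floor_less_iff[of "(real n + 1) * p" k] unfolding jstar_def by linarith

lemma qj_nonneg: "0 \<le> qj n p k"
  by (simp add: qj_def Qn_def)

lemma qj_le_1: "qj n p k \<le> 1"
  by (simp add: qj_def Qn_def)

lemma qj_eq_1: "k \<le> 0 \<Longrightarrow> qj n p k = 1"
  by (simp add: qj_def Qn_def order_trans[of _ 0])

lemma qj_eq_pj_plus: "qj n p k = pj n p k + qj n p (k + 1)"
  by (simp add: pj_def)

lemma pj_nonneg: "0 \<le> pj n p k"
  unfolding pj_def qj_def Qn_def
  by (intro measure_pmf.finite_measure_mono diff_ge_0_iff_ge[THEN iffD2]) auto

lemma Qlin_on_piece: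
  assumes "real_of_int k \<le> t" "t \<le> real_of_int k + 1"
  shows "Qlin n p t = qj n p k - pj n p k * (t - real_of_int k)"
proof (cases "t < real_of_int k + 1")
  case True
  then have "\<lfloor>t\<rfloor> = k"
    using assms by linarith
  then show ?thesis
    by (simp add: Qlin_def pj_def algebra_simps)
next
  case False
  then have "t = real_of_int (k + 1)"
    using assms by simp
  then show ?thesis
    by (simp add: Qlin_def pj_def)
qed

lemma Qlin_of_int: "Qlin n p (real_of_int k) = qj n p k"
  using Qlin_on_piece[of k "real_of_int k"] by simp

lemma Qlin_antimono_on_piece:
  assumes "real_of_int k \<le> a" "a \<le> b" "b \<le> real_of_int k + 1"
  shows "Qlin n p b \<le> Qlin n p a"
  using Qlin_on_piece[of k a] Qlin_on_piece[of k b] assms pj_nonneg[of n p k]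
  by (simp add: mult_left_mono)

lemma Qlin_convex_combination:
  "Qlin n p t = (1 - (t - \<lfloor>t\<rfloor>)) * qj n p \<lfloor>t\<rfloor> + (t - \<lfloor>t\<rfloor>) * qj n p (\<lfloor>t\<rfloor> + 1)"
  by (simp add: Qlin_def Let_def)

lemma Qlin_nonneg: "0 \<le> Qlin n p t"
  unfolding Qlin_convex_combination
  by (intro add_nonneg_nonneg mult_nonneg_nonneg qj_nonneg) linarith+

lemma Qlin_le_1: "Qlin n p t \<le> 1"
proof -
  define \<theta> where "\<theta> = t - \<lfloor>t\<rfloor>"
  have "0 \<le> \<theta>" "\<theta> \<le> 1"
    unfolding \<theta>_def by linarith+
  then have "(1 - \<theta>) * qj n p \<lfloor>t\<rfloor> \<le> 1 - \<theta>" "\<theta> * qj n p (\<lfloor>t\<rfloor> + 1) \<le> \<theta>"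
    using mult_left_mono[OF qj_le_1] by (metis diff_ge_0_iff_ge mult.right_neutral)+
  then show ?thesis
    unfolding Qlin_convex_combination \<theta>_def[symmetric] by linarith
qed

lemma Qlin_eq_1:
  assumes "t \<le> 0"
  shows "Qlin n p t = 1"
proof (cases "t = 0")
  case False
  then have le: "\<lfloor>t\<rfloor> \<le> 0" "\<lfloor>t\<rfloor> + 1 \<le> 0"
    using assms by linarith+
  show ?thesis
    unfolding Qlin_convex_combination qj_eq_1[OF le(1)] qj_eq_1[OF le(2)] by simp
qed (simp add: Qlin_def qj_eq_1)

lemma QlinLC_eq_lc_majorant: "QlinLC n p t = lc_majorant (Qlin n p) t"
  by (simp add: QlinLC_def lc_majorant_def)

locale binomial_tail =
  fixes n :: nat and p :: real
  assumes p_pos: "0 < p" and p_less_1: "p < 1"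
begin

abbreviation P :: "int \<Rightarrow> real" where "P \<equiv> pj n p"
abbreviation Q :: "int \<Rightarrow> real" where "Q \<equiv> qj n p"
abbreviation QL :: "real \<Rightarrow> real" where "QL \<equiv> Qlin n p"
abbreviation js :: int where "js \<equiv> jstar n p"

lemma qj_eq_0:
  assumes "int n + 1 \<le> k"
  shows "Q k = 0"
proof -
  have "set_pmf (binomial_pmf n p) \<inter> {i. real_of_int k \<le> real i} = {}"
    using assms p_pos p_less_1 by auto
  then show ?thesis
    unfolding qj_def Qn_def using measure_pmf_zero_iff by blast
qed

lemma pj_of_nat: "P (int k) = real (n choose k) * p ^ k * (1 - p) ^ (n - k)"
proof -
  let ?M = "binomial_pmf n p"
  have "P (int k) = measure ?M {i. real k \<le> real i} - measure ?M {i. real (k + 1) \<le> real i}"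
    unfolding pj_def qj_def Qn_def by (simp add: add.commute)
  also have "\<dots> = measure ?M ({i. real k \<le> real i} - {i. real (k + 1) \<le> real i})"
    by (subst measure_pmf.finite_measure_Diff) auto
  also have "{i. real k \<le> real i} - {i. real (k + 1) \<le> real i} = {k}"
    by auto
  finally show ?thesis
    using p_pos p_less_1 by (simp add: measure_pmf_single)
qed

lemma pj_pos:
  assumes "0 \<le> k" "k \<le> int n"
  shows "0 < P k"
proof -
  obtain m where "k = int m" "m \<le> n"
    using assms by (metis nat_0_le nat_le_iff)
  then show ?thesis
    using pj_of_nat[of m] p_pos p_less_1 by simp
qed

lemma qj_pos:
  assumes "k \<le> int n"
  shows "0 < Q k"
proof (cases "k \<le> 0")
  case False
  then show ?thesis
    using qj_eq_pj_plus[of n p k] pj_pos[of k] qj_nonneg[of n p "k + 1"] assms by simp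
qed (simp add: qj_eq_1)

lemma Qlin_eq_0:
  assumes "real n + 1 \<le> t"
  shows "QL t = 0"
proof -
  have "int n + 1 \<le> \<lfloor>t\<rfloor>"
    using assms by linarith
  then show ?thesis
    unfolding Qlin_convex_combination by (simp add: qj_eq_0)
qed

lemma Qlin_pos_iff: "0 < QL t \<longleftrightarrow> t < real n + 1"
proof
  assume "t < real n + 1"
  then have "0 < Q \<lfloor>t\<rfloor>" "0 \<le> t - \<lfloor>t\<rfloor>" "t - \<lfloor>t\<rfloor> < 1"
    using qj_pos[of "\<lfloor>t\<rfloor>"] by linarith+
  then show "0 < QL t"
    unfolding Qlin_convex_combination
    by (intro add_pos_nonneg mult_pos_pos mult_nonneg_nonneg qj_nonneg) auto
next
  assume "0 < QL t"
  then show "t < real n + 1"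
    using Qlin_eq_0[of t] by (cases "t < real n + 1") auto
qed

lemma pj_ratio:
  assumes "1 \<le> k" "k \<le> int n"
  shows "P (k - 1) * ((real n - real_of_int k + 1) * p) = P k * (real_of_int k * (1 - p))"
proof -
  define m where "m = nat (k - 1)"
  have m: "k = int m + 1" "m < n"
    using assms unfolding m_def by auto
  have "Suc m * (n choose Suc m) = (n - m) * (n choose m)"
    by (metis binomial_absorb_comp binomial_absorption)
  then have choose: "real (Suc m) * real (n choose Suc m) = (real n - real m) * real (n choose m)"
    using m(2) by (metis of_nat_diff of_nat_mult less_imp_le_nat)
  have pow: "(1 - p) ^ (n - m) = (1 - p) ^ (n - Suc m) * (1 - p)"
    using m(2) by (simp add: Suc_diff_Suc[symmetric])
  have "P (k - 1) * ((real n - real_of_int k + 1) * p)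
      = (real n - real m) * real (n choose m) * p ^ Suc m * (1 - p) ^ (n - m)"
    using pj_of_nat[of m] m by (simp add: algebra_simps)
  also have "\<dots> = real (Suc m) * real (n choose Suc m) * p ^ Suc m * (1 - p) ^ (n - Suc m) * (1 - p)"
    unfolding choose[symmetric] pow by (simp only: mult.assoc)
  also have "\<dots> = P k * (real_of_int k * (1 - p))"
    using pj_of_nat[of "Suc m"] m by (simp add: algebra_simps)
  finally show ?thesis .
qed

lemma jstar_ge_1: "1 \<le> js"
proof -
  have "0 \<le> (real n + 1) * p"
    using p_pos by simp
  then show ?thesis
    using jstar_le_iff[of n p 0] by linarith
qed

lemma jstar_le: "js \<le> int n + 1"
  using jstar_le_iff[of n p "int n + 1"] p_less_1 by simp

lemma pj_less_pred_iff:
  assumes "1 \<le> k" "k \<le> int n"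
  shows "P k < P (k - 1) \<longleftrightarrow> js \<le> k"
proof -
  define A where "A = (real n - real_of_int k + 1) * p"
  define B where "B = real_of_int k * (1 - p)"
  have A: "0 < A" and Pk: "0 < P k"
    using assms p_pos pj_pos[of k] by (simp_all add: A_def)
  have "P k < P (k - 1) \<longleftrightarrow> P k * A < P (k - 1) * A"
    using A by simp
  also have "\<dots> \<longleftrightarrow> P k * A < P k * B"
    using pj_ratio[OF assms] by (simp add: A_def B_def)
  also have "\<dots> \<longleftrightarrow> A < B"
    using Pk by simp
  also have "\<dots> \<longleftrightarrow> (real n + 1) * p < real_of_int k"
    by (simp add: A_def B_def algebra_simps)
  finally show ?thesis
    by (simp add: jstar_le_iff)
qed

lemma pj_mono_below_jstar:
  assumes "1 \<le> k" "k < js"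
  shows "P (k - 1) \<le> P k"
  using pj_less_pred_iff[of k] assms jstar_le by simp

lemma pj_decreasing:
  assumes "js \<le> k" "k \<le> int n"
  shows "P k < P (k - 1)"
  using pj_less_pred_iff[of k] assms jstar_ge_1 by simp

lemma pj_log_concave:
  assumes "1 \<le> m" "m + 1 \<le> int n"
  shows "P (m - 1) * P (m + 1) \<le> P m ^ 2"
proof -
  define a where "a = (real n - real_of_int m + 1) * (real_of_int m + 1) * (p * (1 - p))"
  have a: "0 < a"
    using assms p_pos p_less_1 by (simp add: a_def)
  have "P (m - 1) * P (m + 1) * a
      = (P (m - 1) * ((real n - real_of_int m + 1) * p))
        * (P (m + 1) * ((real_of_int (m + 1)) * (1 - p)))"
    by (simp add: a_def algebra_simps)
  also have "\<dots> = (P m * (real_of_int m * (1 - p))) * (P m * ((real n - real_of_int m) * p))"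
    using pj_ratio[of m] pj_ratio[of "m + 1"] assms by simp
  also have "\<dots> = P m ^ 2 * (real_of_int m * (real n - real_of_int m)) * (p * (1 - p))"
    by (simp add: algebra_simps power2_eq_square)
  also have "\<dots> \<le> P m ^ 2 * ((real n - real_of_int m + 1) * (real_of_int m + 1)) * (p * (1 - p))"
  proof -
    have "real_of_int m * (real n - real_of_int m) \<le> (real n - real_of_int m + 1) * (real_of_int m + 1)"
      by (simp add: algebra_simps)
    then show ?thesis
      using p_pos p_less_1 by (intro mult_left_mono mult_right_mono) auto
  qed
  also have "\<dots> = P m ^ 2 * a"
    by (simp add: a_def mult.assoc)
  finally show ?thesis
    using a by simp
qed

text \<open>In terms of \<open>vj\<close> and \<open>rj\<close> below this reads \<open>vj m * (rj m - 1) \<le> 1\<close>. It is trivial at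
  \<open>m = n\<close>, where \<open>Q n = P n\<close>, and log-concavity of \<open>P\<close> carries it downward.\<close>

lemma pj_diff_mult_qj_le:
  assumes "js \<le> m" "m \<le> int n"
  shows "(P (m - 1) - P m) * Q m \<le> P (m - 1) * P m"
  using assms(2,1)
proof (induction m rule: int_le_induct)
  case base
  have "Q (int n) = P (int n)"
    using qj_eq_pj_plus[of n p n] qj_eq_0[of "int n + 1"] by simp
  then show ?case
    using pj_nonneg[of n p n] by (simp add: algebra_simps)
next
  case (step i)
  define m where "m = i - 1"
  have m: "1 \<le> m" "m + 1 \<le> int n" "js \<le> m"
    using step jstar_ge_1 by (auto simp: m_def)
  have IH: "(P m - P (m + 1)) * Q (m + 1) \<le> P m * P (m + 1)"
    using step.IH m by (simp add: m_def)
  have dec: "P m < P (m - 1)" "P (m + 1) < P m"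
    using pj_decreasing[of m] pj_decreasing[of "m + 1"] m by auto
  have "(P (m - 1) - P m) * Q (m + 1) * (P m - P (m + 1))
      = (P (m - 1) - P m) * ((P m - P (m + 1)) * Q (m + 1))"
    by (simp add: algebra_simps)
  also have "\<dots> \<le> (P (m - 1) - P m) * (P m * P (m + 1))"
    using IH dec by (intro mult_left_mono) auto
  also have "\<dots> = ((P (m - 1) - P m) * P (m + 1)) * P m"
    by (simp add: algebra_simps)
  also have "\<dots> \<le> (P m * (P m - P (m + 1))) * P m"
    using pj_log_concave[OF m(1,2)] pj_pos[of m] m
    by (intro mult_right_mono) (auto simp: algebra_simps power2_eq_square)
  also have "\<dots> = (P m * P m) * (P m - P (m + 1))"
    by (simp add: algebra_simps)
  finally have "(P (m - 1) - P m) * Q (m + 1) \<le> P m * P m"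
    using dec by simp
  then show ?case
    using qj_eq_pj_plus[of n p m] by (simp add: m_def[symmetric] algebra_simps)
qed

subsection \<open>Bridges\<close>

definition vj :: "int \<Rightarrow> real" where
  "vj j = Q j / P (j - 1)"

definition rj :: "int \<Rightarrow> real" where
  "rj j = P (j - 1) / P j"

abbreviation lo :: "int \<Rightarrow> real" where
  "lo j \<equiv> yj n p j + 1/2"

abbreviation hi :: "int \<Rightarrow> real" where
  "hi j \<equiv> xj n p j + 1/2"

lemma
  assumes "js \<le> j" "j \<le> int n"
  shows rj_gt_1: "1 < rj j"
    and vj_pos: "0 < vj j"
    and vj_mult_rj: "vj j * rj j = 1 + vj (j + 1)"
    and vj_mult_rj_minus_1_le: "vj j * (rj j - 1) \<le> 1"
proof -
  have pos: "0 < P j" "0 < P (j - 1)" "0 < Q j" and dec: "P j < P (j - 1)"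
    using assms jstar_ge_1 pj_pos[of j] pj_pos[of "j - 1"] qj_pos[of j] pj_decreasing[of j]
    by auto
  show "1 < rj j" "0 < vj j"
    using pos dec by (simp_all add: rj_def vj_def)
  show "vj j * rj j = 1 + vj (j + 1)"
    using pos qj_eq_pj_plus[of n p j] by (simp add: rj_def vj_def field_simps)
  have "vj j * (rj j - 1) = (P (j - 1) - P j) * Q j / (P (j - 1) * P j)"
    using pos by (simp add: rj_def vj_def field_simps)
  also have "\<dots> \<le> 1"
    using pj_diff_mult_qj_le[OF assms] pos by simp
  finally show "vj j * (rj j - 1) \<le> 1" .
qed

lemma
  assumes "js \<le> j" "j \<le> int n"
  shows lo_eq: "lo j = real_of_int j - vj j * (logmean (rj j) - 1)"
    and hi_eq: "hi j = real_of_int j + vj j * (rj j - logmean (rj j))"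
proof -
  have pos: "0 < P j" "0 < P (j - 1)"
    using assms jstar_ge_1 pj_pos[of j] pj_pos[of "j - 1"] by auto
  have ln: "0 < ln (rj j)"
    using rj_gt_1[OF assms] by simp
  have u: "Q j / P j = vj j * rj j"
    using pos by (simp add: vj_def rj_def)
  have K: "(vj j - vj j * rj j) / ln (rj j) = - (vj j * logmean (rj j))"
    using ln by (simp add: logmean_def field_simps)
  have "lo j = real_of_int j + vj j + (vj j - vj j * rj j) / ln (rj j)"
    using assms(2) by (simp add: yj_def u flip: vj_def rj_def)
  then show "lo j = real_of_int j - vj j * (logmean (rj j) - 1)"
    unfolding K by (simp add: algebra_simps)
  have "hi j = real_of_int j + vj j * rj j + (vj j - vj j * rj j) / ln (rj j)"
    using assms(2) by (simp add: xj_def u flip: vj_def rj_def)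
  then show "hi j = real_of_int j + vj j * (rj j - logmean (rj j))"
    unfolding K by (simp add: algebra_simps)
qed

lemma
  assumes "js \<le> j" "j \<le> int n"
  shows lo_le: "lo j \<le> real_of_int j"
    and lo_ge: "real_of_int j - 1 \<le> lo j"
    and hi_ge: "real_of_int j \<le> hi j"
    and lo_less_hi: "lo j < hi j"
proof -
  note r = rj_gt_1[OF assms] and v = vj_pos[OF assms]
  have L: "1 \<le> logmean (rj j)" "logmean (rj j) \<le> rj j"
    using one_le_logmean[OF r] logmean_le[OF r] by auto
  show "lo j \<le> real_of_int j" "real_of_int j \<le> hi j"
    using L v unfolding lo_eq[OF assms] hi_eq[OF assms] by simp_all
  have "vj j * (logmean (rj j) - 1) \<le> vj j * (rj j - 1)"
    using L v by (intro mult_left_mono) auto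
  then show "real_of_int j - 1 \<le> lo j"
    using vj_mult_rj_minus_1_le[OF assms] unfolding lo_eq[OF assms] by linarith
  have "hi j - lo j = vj j * (rj j - 1)"
    unfolding lo_eq[OF assms] hi_eq[OF assms] by (simp add: algebra_simps)
  moreover have "0 < vj j * (rj j - 1)"
    using r v by simp
  ultimately show "lo j < hi j"
    by simp
qed

lemma vj_mult_logmean_le_prev:
  assumes "js \<le> j" "j + 1 \<le> int n"
  shows "vj (j + 1) * logmean (rj (j + 1)) \<le> vj j * logmean (rj j)"
proof -
  have j: "js \<le> j" "j \<le> int n" and j': "js \<le> j + 1" "j + 1 \<le> int n"
    using assms by auto
  define r r' v v' where "r = rj j" and "r' = rj (j + 1)" and "v = vj j" and "v' = vj (j + 1)"
  have r: "1 < r" "r \<le> r'"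
  proof -
    show "1 < r"
      using rj_gt_1[OF j] by (simp add: r_def)
    have "P (j - 1) * P (j + 1) \<le> P j ^ 2"
      using pj_log_concave[of j] assms jstar_ge_1 by simp
    moreover have "0 < P j" "0 < P (j + 1)"
      using pj_pos[of j] pj_pos[of "j + 1"] j' jstar_ge_1 by auto
    ultimately show "r \<le> r'"
      by (simp add: r_def r'_def rj_def field_simps power2_eq_square)
  qed
  have v': "0 \<le> v'" "v' * r' \<le> 1 + v'"
    using vj_pos[OF j'] vj_mult_rj_minus_1_le[OF j'] by (simp_all add: v'_def r'_def algebra_simps)
  have "v' * logmean r' = v' * r' * (logmean r' / r')"
    using r by simp
  also have "\<dots> \<le> (1 + v') * (logmean r / r)"
    using v' r logmean_div_antimono[OF r] one_le_logmean[of r']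
    by (intro mult_mono) (auto simp: field_simps)
  also have "(1 + v') * (logmean r / r) = v * r * (logmean r / r)"
    using vj_mult_rj[OF j] by (simp add: v_def v'_def r_def)
  also have "\<dots> = v * logmean r"
    using r by simp
  finally show ?thesis
    by (simp add: r_def r'_def v_def v'_def)
qed

lemma hi_le_next_lo:
  assumes "js \<le> j" "j + 1 \<le> int n"
  shows "hi j \<le> lo (j + 1)"
proof -
  have j: "js \<le> j" "j \<le> int n" and j': "js \<le> j + 1" "j + 1 \<le> int n"
    using assms by auto
  have "hi j = real_of_int j + 1 + vj (j + 1) - vj j * logmean (rj j)"
    unfolding hi_eq[OF j] using vj_mult_rj[OF j] by (simp add: algebra_simps)
  moreover have "lo (j + 1) = real_of_int j + 1 + vj (j + 1) - vj (j + 1) * logmean (rj (j + 1))"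
    unfolding lo_eq[OF j'] by (simp add: algebra_simps)
  ultimately show ?thesis
    using vj_mult_logmean_le_prev[OF assms] by simp
qed

lemma hi_le:
  assumes "js \<le> j" "j \<le> int n"
  shows "hi j \<le> real_of_int j + 1"
proof (cases "j + 1 \<le> int n")
  case True
  then show ?thesis
    using hi_le_next_lo[OF assms(1) True] lo_le[of "j + 1"] assms by simp
next
  case False
  then have "j = int n"
    using assms by simp
  then have "vj (j + 1) = 0"
    by (simp add: vj_def qj_eq_0)
  then have "hi j = real_of_int j + 1 - vj j * logmean (rj j)"
    unfolding hi_eq[OF assms] using vj_mult_rj[OF assms] by (simp add: algebra_simps)
  moreover have "0 \<le> vj j * logmean (rj j)"
    using vj_pos[OF assms] one_le_logmean[OF rj_gt_1[OF assms]] by simp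
  ultimately show ?thesis
    by simp
qed

lemma
  assumes "js \<le> j" "j \<le> int n"
  shows Qlin_lo: "QL (lo j) = Q j * logmean (rj j)"
    and Qlin_hi: "QL (hi j) = Q j * logmean (rj j) / rj j"
proof -
  have pos: "0 < P j" "0 < P (j - 1)"
    using assms jstar_ge_1 pj_pos[of j] pj_pos[of "j - 1"] by auto
  have "QL (lo j) = Q (j - 1) - P (j - 1) * (lo j - real_of_int (j - 1))"
    using Qlin_on_piece[of "j - 1" "lo j"] lo_ge[OF assms] lo_le[OF assms] by simp
  also have "\<dots> = Q j * logmean (rj j)"
    unfolding lo_eq[OF assms] using qj_eq_pj_plus[of n p "j - 1"] pos
    by (simp add: vj_def field_simps)
  finally show "QL (lo j) = Q j * logmean (rj j)" .
  have "QL (hi j) = Q j - P j * (hi j - real_of_int j)"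
    using Qlin_on_piece[of j "hi j"] hi_ge[OF assms] hi_le[OF assms] by simp
  also have "\<dots> = Q j * logmean (rj j) / rj j"
    unfolding hi_eq[OF assms] using pos by (simp add: vj_def rj_def field_simps)
  finally show "QL (hi j) = Q j * logmean (rj j) / rj j" .
qed

subsection \<open>Touching exponentials\<close>

text \<open>\<open>tilt \<sigma>\<close> is maximal at \<open>t\<close> exactly when \<open>s \<mapsto> exp (tilt \<sigma> t - \<sigma> * s)\<close> touches \<open>QL\<close> at \<open>t\<close>.\<close>

definition tilt :: "real \<Rightarrow> real \<Rightarrow> real" where
  "tilt \<sigma> t = ln (QL t) + \<sigma> * t"

lemma tilt_le_on_piece:
  assumes "real_of_int k \<le> s" "s \<le> real_of_int k + 1" "real_of_int k \<le> w" "w \<le> real_of_int k + 1"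
    and "s < real n + 1" "w < real n + 1" and "(\<sigma> - P k / QL w) * (s - w) \<le> 0"
  shows "tilt \<sigma> s \<le> tilt \<sigma> w"
proof -
  have pos: "0 < QL s" "0 < QL w"
    using Qlin_pos_iff assms by auto
  have "QL s / QL w - 1 = (QL s - QL w) / QL w"
    using pos by (simp add: field_simps)
  also have "QL s - QL w = - P k * (s - w)"
    using Qlin_on_piece[of k s] Qlin_on_piece[of k w] assms by (simp add: algebra_simps)
  finally have "QL s / QL w - 1 = - (P k / QL w) * (s - w)"
    by simp
  moreover have "ln (QL s) - ln (QL w) \<le> QL s / QL w - 1"
    using ln_le_minus_one[of "QL s / QL w"] pos by (simp add: ln_div)
  moreover have "(\<sigma> - P k / QL w) * (s - w) = \<sigma> * s - \<sigma> * w - (P k / QL w) * (s - w)"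
    by (simp add: algebra_simps)
  ultimately show ?thesis
    using assms(7) by (simp add: tilt_def)
qed

lemma tilt_le_at_critical_point:
  assumes "real_of_int k \<le> s" "s \<le> real_of_int k + 1" "real_of_int k \<le> w" "w \<le> real_of_int k + 1"
    and "s < real n + 1" "w < real n + 1"
  shows "tilt (P k / QL w) s \<le> tilt (P k / QL w) w"
  using tilt_le_on_piece[OF assms] by simp

lemma tilt_le_lower_slope:
  assumes "\<sigma> \<le> \<sigma>'" "a \<le> s" "tilt \<sigma>' s \<le> tilt \<sigma>' a"
  shows "tilt \<sigma> s \<le> tilt \<sigma> a"
proof -
  have "(\<sigma> - \<sigma>') * s \<le> (\<sigma> - \<sigma>') * a"
    using assms(1,2) by (intro mult_left_mono_neg) auto
  then show ?thesis
    using assms(3) by (simp add: tilt_def algebra_simps)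
qed

lemma tilt_le_higher_slope:
  assumes "\<sigma>' \<le> \<sigma>" "s \<le> a" "tilt \<sigma>' s \<le> tilt \<sigma>' a"
  shows "tilt \<sigma> s \<le> tilt \<sigma> a"
proof -
  have "(\<sigma> - \<sigma>') * s \<le> (\<sigma> - \<sigma>') * a"
    using assms(1,2) by (intro mult_left_mono) auto
  then show ?thesis
    using assms(3) by (simp add: tilt_def algebra_simps)
qed

lemma slope_mono_on_piece:
  assumes "real_of_int k \<le> t" "t \<le> t'" "t' \<le> real_of_int k + 1" "t' < real n + 1"
  shows "P k / QL t \<le> P k / QL t'"
proof -
  have "0 < QL t'" "QL t' \<le> QL t"
    using assms Qlin_pos_iff Qlin_antimono_on_piece[of k t t'] by auto
  then show ?thesis
    using pj_nonneg by (intro divide_left_mono) auto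
qed

definition hazard :: "int \<Rightarrow> real" where
  "hazard k = P k / Q k"

lemma hazard_le_slope:
  assumes "real_of_int k \<le> t" "t \<le> real_of_int k + 1" "t < real n + 1"
  shows "hazard k \<le> P k / QL t"
  using slope_mono_on_piece[of k "real_of_int k" t] assms by (simp add: hazard_def Qlin_of_int)

lemma slope_le_end_slope:
  assumes "real_of_int k \<le> t" "t \<le> real_of_int k + 1" "k + 1 \<le> int n"
  shows "P k / QL t \<le> P k / Q (k + 1)"
  using slope_mono_on_piece[of k t "real_of_int k + 1"] assms Qlin_of_int[of n p "k + 1"] by simp

lemma hazard_le_end_slope:
  assumes "k + 1 \<le> int n"
  shows "hazard k \<le> P k / Q (k + 1)"
  using hazard_le_slope[of k "real_of_int k + 1"] assms Qlin_of_int[of n p "k + 1"] by simp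

lemma end_slope_le_hazard_next:
  assumes "0 \<le> k" "k + 1 < js"
  shows "P k / Q (k + 1) \<le> hazard (k + 1)"
  unfolding hazard_def using pj_mono_below_jstar[of "k + 1"] assms qj_pos[of "k + 1"] jstar_le
  by (intro divide_right_mono) auto

lemma hazard_mono:
  assumes "0 \<le> k" "k \<le> k'" "k' < js"
  shows "hazard k \<le> hazard k'"
  using assms(2,3)
proof (induction k' rule: int_ge_induct)
  case (step i)
  have "hazard i \<le> P i / Q (i + 1)"
    using hazard_le_end_slope[of i] step.prems jstar_le by simp
  also have "\<dots> \<le> hazard (i + 1)"
    using end_slope_le_hazard_next[of i] step assms(1) by simp
  finally show ?case
    using step by simp
qed simp

lemma tilt_le_piece_start:
  assumes "\<sigma> \<le> hazard k" "real_of_int k \<le> s" "s \<le> real_of_int k + 1" "s < real n + 1"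
    and "k \<le> int n"
  shows "tilt \<sigma> s \<le> tilt \<sigma> (real_of_int k)"
  using assms by (intro tilt_le_on_piece[of k])
    (auto simp: Qlin_of_int hazard_def intro: mult_nonpos_nonneg)

lemma tilt_le_piece_end:
  assumes "P k / Q (k + 1) \<le> \<sigma>" "real_of_int k \<le> s" "s \<le> real_of_int k + 1"
    and "k + 1 \<le> int n"
  shows "tilt \<sigma> s \<le> tilt \<sigma> (real_of_int k + 1)"
  using assms Qlin_of_int[of n p "k + 1"]
  by (intro tilt_le_on_piece[of k]) (auto intro: mult_nonneg_nonpos)

lemma tilt_increasing_upto:
  assumes "0 \<le> m" "m < js" "hazard m \<le> \<sigma>" "s \<le> real_of_int m"
  shows "tilt \<sigma> s \<le> tilt \<sigma> (real_of_int m)"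
  using assms
proof (induction m arbitrary: s rule: int_ge_induct)
  case base
  have "0 \<le> hazard 0"
    unfolding hazard_def by (intro divide_nonneg_nonneg pj_nonneg qj_nonneg)
  then have "0 \<le> \<sigma>"
    using base by linarith
  then show ?case
    using base by (simp add: tilt_def Qlin_eq_1 mult_nonneg_nonpos)
next
  case (step i)
  have "P i / Q (i + 1) \<le> \<sigma>"
    using end_slope_le_hazard_next[of i] step by simp
  then have piece: "tilt \<sigma> x \<le> tilt \<sigma> (real_of_int i + 1)"
    if "real_of_int i \<le> x" "x \<le> real_of_int i + 1" for x
    using that step jstar_le by (intro tilt_le_piece_end) auto
  show ?case
  proof (cases "s \<le> real_of_int i")
    case True
    have "hazard i \<le> \<sigma>"
      using hazard_le_end_slope[of i] \<open>P i / Q (i + 1) \<le> \<sigma>\<close> step jstar_le by simp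
    then have "tilt \<sigma> s \<le> tilt \<sigma> (real_of_int i)"
      using step True by simp
    also have "\<dots> \<le> tilt \<sigma> (real_of_int i + 1)"
      using piece by simp
    finally show ?thesis
      by simp
  qed (use piece step in auto)
qed

lemma tilt_decreasing_from:
  assumes "0 \<le> m" "m < js" "\<sigma> \<le> hazard m" "real_of_int m \<le> s" "s \<le> real_of_int js"
    and "s < real n + 1"
  shows "tilt \<sigma> s \<le> tilt \<sigma> (real_of_int m)"
proof -
  have "m \<le> js - 1"
    using assms(2) by simp
  then show ?thesis
    using assms(1,3-6)
  proof (induction m arbitrary: s rule: int_le_induct)
    case base
    then show ?case
      using jstar_le by (intro tilt_le_piece_start) auto
  next
    case (step i)
    have "\<sigma> \<le> hazard i"
      using step hazard_mono[of "i - 1" i] by simp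
    show ?case
    proof (cases "s \<le> real_of_int i")
      case False
      then have "tilt \<sigma> s \<le> tilt \<sigma> (real_of_int i)"
        using step \<open>\<sigma> \<le> hazard i\<close> by simp
      also have "\<dots> \<le> tilt \<sigma> (real_of_int (i - 1))"
        using step jstar_le by (intro tilt_le_piece_start) auto
      finally show ?thesis .
    next
      case True
      then show ?thesis
        using step jstar_le by (intro tilt_le_piece_start) auto
    qed
  qed
qed

lemma tilt_le_left_region:
  assumes "0 \<le> k" "k < js" "real_of_int k \<le> t" "t \<le> real_of_int k + 1" "t < real n + 1"
    and "s \<le> real_of_int js" "s < real n + 1"
  shows "tilt (P k / QL t) s \<le> tilt (P k / QL t) t"
proof -
  define \<sigma> where "\<sigma> = P k / QL t"
  have kn: "k \<le> int n"
    using assms jstar_le by simp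
  have piece: "tilt \<sigma> x \<le> tilt \<sigma> t"
    if "real_of_int k \<le> x" "x \<le> real_of_int k + 1" "x < real n + 1" for x
    unfolding \<sigma>_def using that assms by (intro tilt_le_at_critical_point) auto
  consider "s \<le> real_of_int k" | "real_of_int k \<le> s" "s \<le> real_of_int k + 1"
    | "real_of_int k + 1 < s"
    by linarith
  then show ?thesis
  proof cases
    case 1
    have "hazard k \<le> \<sigma>"
      unfolding \<sigma>_def using assms by (intro hazard_le_slope)
    then have "tilt \<sigma> s \<le> tilt \<sigma> (real_of_int k)"
      using 1 assms by (intro tilt_increasing_upto) auto
    also have "\<dots> \<le> tilt \<sigma> t"
      using piece assms kn by simp
    finally show ?thesis
      by (simp add: \<sigma>_def)
  next
    case 2
    then show ?thesis
      using piece assms by (simp add: \<sigma>_def)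
  next
    case 3
    then have k1: "k + 1 < js"
      using assms(6) by linarith
    have "\<sigma> \<le> P k / Q (k + 1)"
      unfolding \<sigma>_def using assms k1 jstar_le by (intro slope_le_end_slope) auto
    also have "\<dots> \<le> hazard (k + 1)"
      using end_slope_le_hazard_next[OF assms(1) k1] .
    finally have "tilt \<sigma> s \<le> tilt \<sigma> (real_of_int (k + 1))"
      using 3 k1 assms by (intro tilt_decreasing_from) auto
    also have "\<dots> \<le> tilt \<sigma> t"
      using piece k1 jstar_le by simp
    finally show ?thesis
      by (simp add: \<sigma>_def)
  qed
qed

definition bridge_slope :: "int \<Rightarrow> real" where
  "bridge_slope j = P (j - 1) / (Q j * logmean (rj j))"

lemma
  assumes "js \<le> j" "j \<le> int n"
  shows bridge_slope_eq_lo: "bridge_slope j = P (j - 1) / QL (lo j)"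
    and bridge_slope_eq_hi: "bridge_slope j = P j / QL (hi j)"
    and hi_less: "hi j < real n + 1"
    and tilt_lo_eq_hi: "tilt (bridge_slope j) (lo j) = tilt (bridge_slope j) (hi j)"
proof -
  note r = rj_gt_1[OF assms]
  have pos: "0 < P j" "0 < P (j - 1)" "0 < Q j" "0 < logmean (rj j)"
    using assms jstar_ge_1 pj_pos[of j] pj_pos[of "j - 1"] qj_pos[of j] one_le_logmean[OF r]
    by auto
  show "bridge_slope j = P (j - 1) / QL (lo j)"
    by (simp add: bridge_slope_def Qlin_lo[OF assms])
  have "P j / QL (hi j) = P j * rj j / (Q j * logmean (rj j))"
    using pos r by (simp add: Qlin_hi[OF assms])
  also have "P j * rj j = P (j - 1)"
    using pos by (simp add: rj_def)
  finally show "bridge_slope j = P j / QL (hi j)"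
    by (simp add: bridge_slope_def)
  have QL_pos: "0 < QL (lo j)" "0 < QL (hi j)"
    using pos r by (simp_all add: Qlin_lo[OF assms] Qlin_hi[OF assms])
  then show "hi j < real n + 1"
    using Qlin_pos_iff by blast
  have "0 < Q j * logmean (rj j)"
    using pos by simp
  then have "ln (QL (lo j)) - ln (QL (hi j)) = ln (rj j)"
    using r pos by (simp add: ln_div Qlin_lo[OF assms] Qlin_hi[OF assms])
  moreover have "bridge_slope j * (hi j - lo j) = ln (rj j)"
    unfolding lo_eq[OF assms] hi_eq[OF assms] using pos r
    by (simp add: bridge_slope_def vj_def logmean_def field_simps)
  ultimately show "tilt (bridge_slope j) (lo j) = tilt (bridge_slope j) (hi j)"
    by (simp add: tilt_def algebra_simps)
qed

lemma bridge_slope_mono: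
  assumes "js \<le> j" "j + 1 \<le> int n"
  shows "bridge_slope j \<le> bridge_slope (j + 1)"
proof -
  have j: "js \<le> j" "j \<le> int n" and j': "js \<le> j + 1" "j + 1 \<le> int n"
    using assms by auto
  have "P j / QL (hi j) \<le> P j / QL (lo (j + 1))"
    using hi_ge[OF j] hi_le_next_lo[OF assms] lo_le[OF j'] lo_less_hi[OF j'] hi_less[OF j']
    by (intro slope_mono_on_piece) auto
  then show ?thesis
    unfolding bridge_slope_eq_hi[OF j] bridge_slope_eq_lo[OF j'] by simp
qed

lemma hazard_le_bridge_slope:
  assumes "js \<le> int n"
  shows "hazard (js - 1) \<le> bridge_slope js"
proof -
  have j: "js \<le> js" "js \<le> int n"
    using assms by auto
  have "hazard (js - 1) \<le> P (js - 1) / QL (lo js)"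
    using lo_ge[OF j] lo_le[OF j] lo_less_hi[OF j] hi_less[OF j] by (intro hazard_le_slope) auto
  then show ?thesis
    unfolding bridge_slope_eq_lo[OF j] .
qed

lemma tilt_le_lo_near_bridge:
  assumes "js \<le> j" "j \<le> int n" "real_of_int j - 1 \<le> s" "s \<le> real_of_int j + 1"
    and "s < real n + 1"
  shows "tilt (bridge_slope j) s \<le> tilt (bridge_slope j) (lo j)"
proof (cases "s \<le> real_of_int j")
  case True
  then show ?thesis
    unfolding bridge_slope_eq_lo[OF assms(1,2)]
    using assms lo_ge[OF assms(1,2)] lo_le[OF assms(1,2)] lo_less_hi[OF assms(1,2)]
      hi_less[OF assms(1,2)]
    by (intro tilt_le_at_critical_point) auto
next
  case False
  then have "tilt (bridge_slope j) s \<le> tilt (bridge_slope j) (hi j)"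
    unfolding bridge_slope_eq_hi[OF assms(1,2)]
    using assms hi_ge[OF assms(1,2)] hi_le[OF assms(1,2)] hi_less[OF assms(1,2)]
    by (intro tilt_le_at_critical_point) auto
  then show ?thesis
    using tilt_lo_eq_hi[OF assms(1,2)] by simp
qed

lemma tilt_le_hi_near_bridge:
  assumes "js \<le> j" "j \<le> int n" "real_of_int j - 1 \<le> s" "s \<le> hi j"
  shows "tilt (bridge_slope j) s \<le> tilt (bridge_slope j) (hi j)"
  using assms hi_le[OF assms(1,2)] hi_less[OF assms(1,2)] tilt_lo_eq_hi[OF assms(1,2)]
    tilt_le_lo_near_bridge[OF assms(1,2), of s]
  by simp

lemma tilt_le_right_of_bridge:
  assumes "js \<le> j" "j \<le> int n" "lo j \<le> s" "s < real n + 1"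
  shows "tilt (bridge_slope j) s \<le> tilt (bridge_slope j) (lo j)"
  using assms(2,1,3,4)
proof (induction j arbitrary: s rule: int_le_induct)
  case base
  have "real n - 1 \<le> lo (int n)"
    using lo_ge[of "int n"] base by simp
  then show ?case
    using base by (intro tilt_le_lo_near_bridge) simp_all
next
  case (step i)
  define j where "j = i - 1"
  have j: "js \<le> j" "j \<le> int n" and i: "i = j + 1" "js \<le> i" "i \<le> int n"
    using step.hyps step.prems(1) by (simp_all add: j_def)
  have near: "tilt (bridge_slope j) x \<le> tilt (bridge_slope j) (lo j)"
    if "lo j \<le> x" "x \<le> real_of_int i" "x < real n + 1" for x
    using that lo_ge[OF j] i(1) by (intro tilt_le_lo_near_bridge[OF j]) simp_all
  show ?case
    unfolding j_def[symmetric]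
  proof (cases "s \<le> real_of_int i")
    case True
    then show "tilt (bridge_slope j) s \<le> tilt (bridge_slope j) (lo j)"
      using near step.prems by (simp add: j_def)
  next
    case False
    have "tilt (bridge_slope j) s \<le> tilt (bridge_slope j) (lo i)"
    proof (rule tilt_le_lower_slope)
      show "bridge_slope j \<le> bridge_slope i"
        using bridge_slope_mono[of j] j i by simp
      show "lo i \<le> s"
        using False lo_le[OF i(2,3)] by simp
      then show "tilt (bridge_slope i) s \<le> tilt (bridge_slope i) (lo i)"
        using step.IH i(2) step.prems(3) by blast
    qed
    also have "\<dots> \<le> tilt (bridge_slope j) (lo j)"
      using lo_le[OF j] lo_ge[OF i(2,3)] lo_le[OF i(2,3)] lo_less_hi[OF i(2,3)] hi_less[OF i(2,3)] i(1)
      by (intro near) simp_all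
    finally show "tilt (bridge_slope j) s \<le> tilt (bridge_slope j) (lo j)" .
  qed
qed

lemma tilt_le_left_of_first_bridge:
  assumes "js \<le> int n" "s \<le> hi js"
  shows "tilt (bridge_slope js) s \<le> tilt (bridge_slope js) (hi js)"
proof (cases "real_of_int js - 1 \<le> s")
  case False
  have j: "js \<le> js" "js \<le> int n"
    using assms by simp_all
  have "tilt (bridge_slope js) s \<le> tilt (bridge_slope js) (real_of_int (js - 1))"
    using False hazard_le_bridge_slope[OF assms(1)] jstar_ge_1 by (intro tilt_increasing_upto) simp_all
  also have "\<dots> \<le> tilt (bridge_slope js) (hi js)"
    using hi_ge[OF j] by (intro tilt_le_hi_near_bridge[OF j]) simp_all
  finally show ?thesis .
qed (use tilt_le_hi_near_bridge assms in simp)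

lemma tilt_le_left_of_bridge:
  assumes "js \<le> j" "j \<le> int n" "s \<le> hi j"
  shows "tilt (bridge_slope j) s \<le> tilt (bridge_slope j) (hi j)"
  using assms
proof (induction j arbitrary: s rule: int_ge_induct)
  case base
  then show ?case
    by (intro tilt_le_left_of_first_bridge)
next
  case (step i)
  have i: "js \<le> i" "i \<le> int n" and i': "js \<le> i + 1" "i + 1 \<le> int n"
    using step.hyps step.prems(1) by simp_all
  show ?case
  proof (cases "real_of_int i \<le> s")
    case False
    have "tilt (bridge_slope (i + 1)) s \<le> tilt (bridge_slope (i + 1)) (hi i)"
    proof (rule tilt_le_higher_slope)
      show "bridge_slope i \<le> bridge_slope (i + 1)"
        using bridge_slope_mono[OF i(1) i'(2)] .
      show "s \<le> hi i"
        using False hi_ge[OF i] by simp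
      then show "tilt (bridge_slope i) s \<le> tilt (bridge_slope i) (hi i)"
        using step.IH i(2) by blast
    qed
    also have "\<dots> \<le> tilt (bridge_slope (i + 1)) (hi (i + 1))"
      using hi_ge[OF i] hi_le_next_lo[OF i(1) i'(2)] lo_less_hi[OF i']
      by (intro tilt_le_hi_near_bridge[OF i']) simp_all
    finally show ?thesis .
  qed (use tilt_le_hi_near_bridge[OF i'] step.prems in simp)
qed

lemma tilt_le_bridge:
  assumes "js \<le> j" "j \<le> int n" "s < real n + 1"
  shows "tilt (bridge_slope j) s \<le> tilt (bridge_slope j) (lo j)"
proof (cases "lo j \<le> s")
  case False
  then show ?thesis
    using tilt_le_left_of_bridge[OF assms(1,2), of s] lo_less_hi[OF assms(1,2)]
      tilt_lo_eq_hi[OF assms(1,2)] by simp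
qed (use tilt_le_right_of_bridge assms in blast)

lemma tilt_le_right_of_bridge_if_slope_le:
  assumes "js \<le> j" "j \<le> int n" "\<sigma> \<le> bridge_slope j" "lo j \<le> s" "s < real n + 1"
  shows "tilt \<sigma> s \<le> tilt \<sigma> (lo j)"
  using assms(3,4) tilt_le_right_of_bridge[OF assms(1,2,4,5)] by (rule tilt_le_lower_slope)

lemma tilt_le_left_of_bridge_if_slope_ge:
  assumes "js \<le> j" "j \<le> int n" "bridge_slope j \<le> \<sigma>" "s \<le> hi j"
  shows "tilt \<sigma> s \<le> tilt \<sigma> (hi j)"
  using assms(3,4) tilt_le_left_of_bridge[OF assms(1,2,4)] by (rule tilt_le_higher_slope)

lemma slope_le_first_bridge_slope:
  assumes "0 \<le> k" "k < js" "js \<le> int n" "real_of_int k \<le> t" "t \<le> real_of_int k + 1"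
    and "t \<le> lo js"
  shows "P k / QL t \<le> bridge_slope js"
proof (cases "k = js - 1")
  case True
  have j: "js \<le> js" "js \<le> int n"
    using assms by simp_all
  have "P k / QL t \<le> P k / QL (lo js)"
    using True assms lo_le[OF j] lo_less_hi[OF j] hi_less[OF j] by (intro slope_mono_on_piece) auto
  then show ?thesis
    unfolding bridge_slope_eq_lo[OF j] True .
next
  case False
  then have k1: "k + 1 < js"
    using assms(2) by simp
  have "P k / QL t \<le> P k / Q (k + 1)"
    using assms k1 by (intro slope_le_end_slope) simp_all
  also have "\<dots> \<le> hazard (k + 1)"
    using end_slope_le_hazard_next[OF assms(1) k1] .
  also have "\<dots> \<le> hazard (js - 1)"
    using assms k1 by (intro hazard_mono) simp_all
  also have "\<dots> \<le> bridge_slope js"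
    using hazard_le_bridge_slope[OF assms(3)] .
  finally show ?thesis .
qed

lemma tilt_support_left:
  assumes "0 \<le> k" "k < js" "real_of_int k \<le> t" "t \<le> real_of_int k + 1" "t < real n + 1"
    and "js \<le> int n \<Longrightarrow> t \<le> lo js" "s < real n + 1"
  shows "tilt (P k / QL t) s \<le> tilt (P k / QL t) t"
proof (cases "js \<le> int n \<and> lo js < s")
  case True
  then have j: "js \<le> js" "js \<le> int n"
    by simp_all
  have "tilt (P k / QL t) s \<le> tilt (P k / QL t) (lo js)"
    using True assms j
    by (intro tilt_le_right_of_bridge_if_slope_le[OF j] slope_le_first_bridge_slope) auto
  also have "\<dots> \<le> tilt (P k / QL t) t"
    using assms lo_le[OF j] lo_less_hi[OF j] hi_less[OF j] by (intro tilt_le_left_region) auto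
  finally show ?thesis .
next
  case False
  then have "s \<le> real_of_int js"
    using lo_le[of js] jstar_le assms(7) by (cases "js \<le> int n") auto
  then show ?thesis
    using assms by (intro tilt_le_left_region) auto
qed

lemma tilt_support_between:
  assumes "js \<le> j" "j \<le> int n" "hi j \<le> t" "t < real n + 1"
    and "j + 1 \<le> int n \<Longrightarrow> t \<le> lo (j + 1)" "s < real n + 1"
  shows "tilt (P j / QL t) s \<le> tilt (P j / QL t) t"
proof -
  define \<sigma> where "\<sigma> = P j / QL t"
  have "t \<le> real_of_int j + 1"
    using assms lo_le[of "j + 1"] by (cases "j + 1 \<le> int n") auto
  then have t: "real_of_int j \<le> t" "t \<le> real_of_int j + 1"
    using assms(3) hi_ge[OF assms(1,2)] by simp_all
  have piece: "tilt \<sigma> x \<le> tilt \<sigma> t"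
    if "real_of_int j \<le> x" "x \<le> real_of_int j + 1" "x < real n + 1" for x
    unfolding \<sigma>_def using that t assms(4) by (intro tilt_le_at_critical_point) auto
  consider "s < real_of_int j" | "real_of_int j \<le> s" "s \<le> real_of_int j + 1"
    | "real_of_int j + 1 < s"
    by linarith
  then show ?thesis
  proof cases
    case 1
    have hi: "real_of_int j \<le> hi j" "hi j \<le> real_of_int j + 1" "hi j < real n + 1"
      using hi_ge[OF assms(1,2)] hi_le[OF assms(1,2)] hi_less[OF assms(1,2)] by simp_all
    have "bridge_slope j \<le> \<sigma>"
      unfolding bridge_slope_eq_hi[OF assms(1,2)] \<sigma>_def
      using hi t assms(3,4) by (intro slope_mono_on_piece) auto
    then have "tilt \<sigma> s \<le> tilt \<sigma> (hi j)"
      using 1 hi by (intro tilt_le_left_of_bridge_if_slope_ge[OF assms(1,2)]) auto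
    also have "\<dots> \<le> tilt \<sigma> t"
      using hi by (intro piece)
    finally show ?thesis
      by (simp add: \<sigma>_def)
  next
    case 2
    then show ?thesis
      using piece assms(6) by (simp add: \<sigma>_def)
  next
    case 3
    then have j': "js \<le> j + 1" "j + 1 \<le> int n"
      using assms(1,6) by linarith+
    have lo: "real_of_int j \<le> lo (j + 1)" "lo (j + 1) \<le> real_of_int j + 1" "lo (j + 1) < real n + 1"
      using lo_ge[OF j'] lo_le[OF j'] lo_less_hi[OF j'] hi_less[OF j'] by simp_all
    have "\<sigma> \<le> bridge_slope (j + 1)"
      using slope_mono_on_piece[of j t "lo (j + 1)"] t assms(5) j' lo
      by (simp add: \<sigma>_def bridge_slope_eq_lo[OF j'])
    then have "tilt \<sigma> s \<le> tilt \<sigma> (lo (j + 1))"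
      using 3 lo assms(6) by (intro tilt_le_right_of_bridge_if_slope_le[OF j']) auto
    also have "\<dots> \<le> tilt \<sigma> t"
      using lo by (intro piece)
    finally show ?thesis
      by (simp add: \<sigma>_def)
  qed
qed

lemma last_bridge_before:
  assumes "js \<le> int n" "hi js \<le> t" "\<And>j. js \<le> j \<Longrightarrow> j \<le> int n \<Longrightarrow> \<not> (lo j < t \<and> t < hi j)"
  obtains j where "js \<le> j" "j \<le> int n" "hi j \<le> t" "j + 1 \<le> int n \<Longrightarrow> t \<le> lo (j + 1)"
proof -
  define J where "J = {j. js \<le> j \<and> j \<le> int n \<and> hi j \<le> t}"
  have "finite J"
    by (rule finite_subset[of _ "{js..int n}"]) (auto simp: J_def)
  moreover have "js \<in> J"
    using assms(1,2) by (simp add: J_def)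
  ultimately have "Max J \<in> J" "Max J + 1 \<notin> J"
    using Max_ge[of J "Max J + 1"] by (auto intro: Max_in)
  then show thesis
    using that[of "Max J"] assms(3)[of "Max J + 1"] by (force simp: J_def)
qed

lemma tilt_support_outside_bridges:
  assumes "t < real n + 1" "\<And>j. js \<le> j \<Longrightarrow> j \<le> int n \<Longrightarrow> \<not> (lo j < t \<and> t < hi j)"
  obtains \<sigma> where "\<And>s. s < real n + 1 \<Longrightarrow> tilt \<sigma> s \<le> tilt \<sigma> t"
proof -
  consider "t \<le> 0" | "0 < t" "js \<le> int n \<Longrightarrow> t \<le> lo js" | "js \<le> int n" "lo js < t"
    by fastforce
  then show thesis
  proof cases
    case 1
    have "tilt 0 s \<le> tilt 0 t" if "s < real n + 1" for s
      using that 1 Qlin_pos_iff[of s] Qlin_le_1[of n p s] by (simp add: tilt_def Qlin_eq_1)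
    then show thesis
      using that by blast
  next
    case 2
    define k where "k = \<lceil>t\<rceil> - 1"
    have "t \<le> real_of_int js"
      using 2 lo_le[of js] jstar_le assms(1) by (cases "js \<le> int n") auto
    then have "0 \<le> k" "k < js" "real_of_int k \<le> t" "t \<le> real_of_int k + 1"
      using 2 unfolding k_def by (simp_all add: ceiling_le_iff) linarith+
    then show thesis
      using that tilt_support_left 2 assms(1) by blast
  next
    case 3
    have "hi js \<le> t"
      using 3 assms(2)[of js] by force
    then obtain j where "js \<le> j" "j \<le> int n" "hi j \<le> t" "j + 1 \<le> int n \<Longrightarrow> t \<le> lo (j + 1)"
      using last_bridge_before 3 assms(2) by blast
    then show thesis
      using that tilt_support_between assms(1) by blast
  qed
qed

lemma QlinLC_outside_bridges:
  assumes "\<And>j. js \<le> j \<Longrightarrow> j \<le> int n \<Longrightarrow> \<not> (lo j < t \<and> t < hi j)"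
  shows "QlinLC n p t = QL t"
proof (cases "t < real n + 1")
  case True
  obtain \<sigma> where "\<And>s. s < real n + 1 \<Longrightarrow> tilt \<sigma> s \<le> tilt \<sigma> t"
    using tilt_support_outside_bridges[OF True assms] by blast
  then show ?thesis
    unfolding QlinLC_eq_lc_majorant
    using True Qlin_nonneg Qlin_pos_iff
    by (intro lc_majorant_eq_if_log_supported[of _ _ \<sigma>]) (auto simp: tilt_def)
next
  case False
  then show ?thesis
    unfolding QlinLC_eq_lc_majorant using Qlin_le_1 Qlin_eq_0
    by (subst lc_majorant_eq_0[of _ 1 "real n + 1"]) auto
qed

lemma QlinLC_on_bridge:
  assumes "js \<le> j" "j \<le> int n" "lo j < t" "t < hi j"
  shows "QlinLC n p t = QInterp n p (t - 1/2) j"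
proof -
  have d: "(t - 1/2 - yj n p j) / (xj n p j - yj n p j) = (t - lo j) / (hi j - lo j)"
    by (simp add: algebra_simps)
  have "QInterp n p (t - 1/2) j
      = QL (lo j) powr (1 - (t - lo j) / (hi j - lo j)) * QL (hi j) powr ((t - lo j) / (hi j - lo j))"
    by (simp only: QInterp_def Let_def d)
  also have "\<dots> = QlinLC n p t"
    unfolding QlinLC_eq_lc_majorant
  proof (rule lc_majorant_eq_geometric_interpolation[symmetric])
    show "\<forall>s. 0 < QL s \<longrightarrow> ln (QL s) + bridge_slope j * s \<le> tilt (bridge_slope j) (lo j)"
      using tilt_le_bridge[OF assms(1,2)] Qlin_pos_iff by (simp add: tilt_def)
    show "ln (QL (hi j)) + bridge_slope j * hi j = tilt (bridge_slope j) (lo j)"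
      using tilt_lo_eq_hi[OF assms(1,2)] by (simp add: tilt_def)
  qed (use assms Qlin_nonneg Qlin_pos_iff lo_less_hi[OF assms(1,2)] hi_less[OF assms(1,2)] in
      \<open>auto simp: tilt_def\<close>)
  finally show ?thesis ..
qed

end

theorem proposition2p10:
  fixes n :: nat and p x :: real
  assumes "n \<ge> 1" and "0 < p" and "p < 1"
  shows "(\<forall>j::int. jstar n p \<le> j \<and> j \<le> int n \<and> x \<in> deltaj n p j \<longrightarrow>
            QlinLC n p (x + 1/2) = QInterp n p x j)
       \<and> ((\<nexists>j::int. jstar n p \<le> j \<and> j \<le> int n \<and> x \<in> deltaj n p j) \<longrightarrow>
            QlinLC n p (x + 1/2) = Qlin n p (x + 1/2))"
proof -
  interpret binomial_tail n p
    using assms(2,3) by unfold_locales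
  have delta: "x \<in> deltaj n p j \<longleftrightarrow> lo j < x + 1/2 \<and> x + 1/2 < hi j" for j
    by (auto simp: deltaj_def)
  show ?thesis
    using QlinLC_on_bridge[of _ "x + 1/2"] QlinLC_outside_bridges[of "x + 1/2"]
    unfolding delta by auto
qed

end
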